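(* Consider an execution of the Adaptive Algorithm. Suppose that at some point an unmatched position $p_j$ and an applicant $a_i$ interview each other and the revealed values satisfy $\epsilon^A_{ij}\ge 0$ and $\epsilon^P_{ji}\ge 0$. Then the algorithm (tentatively) matches $a_i$ and $p_j$ to each other in the next iteration, and afterwards $p_j$ interviews only applicants $a_{i'}$ with $i'<\max(i,j+1)$.
   Context: Model. Let $A=\{a_1,\dots,a_n\}$ be a set of applicants and $P=\{p_1,\dots,p_n\}$ a set of positions. Each applicant $a_i$ has a publicly known value $u_i\in\mathbb R$ and each position $p_j$ a publicly known value $v_j\in\mathbb R$, indexed so that $u_1\ge u_2\ge\dots\ge u_n$ and $v_1\ge v_2\ge\dots\ge v_n$. The random variables $\epsilon^A_{ij}$, $\epsilon^P_{ji}$ ($i,j\in[n]$) are mutually independent and identically distributed according to a known distribution symmetric about $0$ (mean zero). The utility of $a_i$ for $p_j$ is $v_j+\epsilon^A_{ij}$ and the utility of $p_j$ for $a_i$ is $u_i+\epsilon^P_{ji}$; the values $\epsilon^A_{ij},\epsilon^P_{ji}$ become known only when $a_i$ and $p_j$ interview each other. The observed utility $v^o_{ij}$ of $a_i$ for $p_j$ equals $v_j+\epsilon^A_{ij}$ if $a_i,p_j$ have interviewed and $v_j$ otherwise; $u^o_{ji}$ is defined symmetrically ($u_i+\epsilon^P_{ji}$ or $u_i$). Write $p_j\succ_{a_i}p_{j'}$ iff $v^o_{ij}>v^o_{ij'}$ and $a_i\succ_{p_j}a_{i'}$ iff $u^o_{ji}>u^o_{ji'}$ (ties broken in favor of the smaller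 index); every agent prefers any partner to being unmatched. For a matching $\mu$, $\mu(x)$ denotes the partner of $x$ ($\emptyset$ if unmatched). Adaptive Algorithm. Initially all agents are unmatched and $v^o_{ij}=v_j$, $u^o_{ji}=u_i$ for all $i,j$. For an unmatched applicant $a$, let $\beta(a)$ be $a$'s most preferred position (w.r.t. current observed utilities) that has not yet rejected $a$. While some applicant is unmatched: let $j^*$ be the smallest index such that $\beta(a_i)=p_{j^*}$ for some unmatched $a_i$; let $a_{i^*}$ be $p_{j^*}$'s favorite applicant among $\{a_i:\beta(a_i)=p_{j^*},\mu(a_i)=\emptyset\}$. If $a_{i^*},p_{j^*}$ have not interviewed and ($i^*\le j^*$ or $a_{i^*}\succ_{p_{j^*}}\mu(p_{j^*})$), then they interview and $v^o_{i^*j^*},u^o_{j^*i^*}$ are updated. Otherwise: if $\mu(p_{j^*})\succ_{p_{j^*}}a_{i^*}$, then $p_{j^*}$ rejects $a_{i^*}$; else $p_{j^*}$ rejects $\mu(p_{j^*})$ (if nonempty) and $a_{i^*},p_{j^*}$ become matched. When all applicants are matched, output $\mu$. *)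

theory Defs
  imports Complex_Main
begin

text \<open>Applicants and positions are indexed 0..n-1 (the paper uses 1..n; all index
comparisons used by the algorithm and the claim are invariant under the uniform shift).\<close>

record market =
  N    :: nat                       \<comment> \<open>number of applicants = number of positions\<close>
  uA   :: "nat \<Rightarrow> real"
  vP   :: "nat \<Rightarrow> real"
  epsA :: "nat \<Rightarrow> nat \<Rightarrow> real"
  epsP :: "nat \<Rightarrow> nat \<Rightarrow> real"

record state =
  mA   :: "nat \<Rightarrow> nat option"
  intv :: "(nat \<times> nat) set"          \<comment> \<open>(i,j): a_i and p_j have interviewed\<close>
  rej  :: "(nat \<times> nat) set"          \<comment> \<open>(i,j): p_j has rejected a_i\<close>

definition vo :: "market \<Rightarrow> state \<Rightarrow> nat \<Rightarrow> nat \<Rightarrow> real" where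
  "vo M s i j = vP M j + (if (i,j) \<in> intv s then epsA M i j else 0)"

definition uo :: "market \<Rightarrow> state \<Rightarrow> nat \<Rightarrow> nat \<Rightarrow> real" where
  "uo M s j i = uA M i + (if (i,j) \<in> intv s then epsP M j i else 0)"

definition prefA :: "market \<Rightarrow> state \<Rightarrow> nat \<Rightarrow> nat \<Rightarrow> nat \<Rightarrow> bool" where
  "prefA M s i j j' \<longleftrightarrow> vo M s i j > vo M s i j' \<or> (vo M s i j = vo M s i j' \<and> j < j')"

definition prefP :: "market \<Rightarrow> state \<Rightarrow> nat \<Rightarrow> nat \<Rightarrow> nat \<Rightarrow> bool" where
  "prefP M s j i i' \<longleftrightarrow> uo M s j i > uo M s j i' \<or> (uo M s j i = uo M s j i' \<and> i < i')"

definition muP :: "market \<Rightarrow> state \<Rightarrow> nat \<Rightarrow> nat option" where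
  "muP M s j = (if \<exists>i < N M. mA s i = Some j
                then Some (LEAST i. i < N M \<and> mA s i = Some j) else None)"

definition unmatched :: "market \<Rightarrow> state \<Rightarrow> nat set" where
  "unmatched M s = {i. i < N M \<and> mA s i = None}"

definition beta :: "market \<Rightarrow> state \<Rightarrow> nat \<Rightarrow> nat option" where
  "beta M s i = (let C = {j. j < N M \<and> (i,j) \<notin> rej s} in
     if C = {} then None
     else Some (THE j. j \<in> C \<and> (\<forall>j'\<in>C. j' \<noteq> j \<longrightarrow> prefA M s i j j')))"

definition favP :: "market \<Rightarrow> state \<Rightarrow> nat \<Rightarrow> nat set \<Rightarrow> nat" where
  "favP M s j C = (THE i. i \<in> C \<and> (\<forall>i'\<in>C. i' \<noteq> i \<longrightarrow> prefP M s j i i'))"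

datatype action = Stop | Interview nat nat | Reject nat nat | Match nat nat

definition act :: "market \<Rightarrow> state \<Rightarrow> action" where
  "act M s = (let U = unmatched M s; J = {j. \<exists>i\<in>U. beta M s i = Some j} in
     if U = {} \<or> J = {} then Stop
     else let j = (LEAST j. j \<in> J);
              C = {i \<in> U. beta M s i = Some j};
              i = favP M s j C;
              better = (case muP M s j of None \<Rightarrow> True | Some i' \<Rightarrow> prefP M s j i i');
              worse = (case muP M s j of None \<Rightarrow> False | Some i' \<Rightarrow> prefP M s j i' i)
          in if (i,j) \<notin> intv s \<and> (i \<le> j \<or> better) then Interview i j
             else if worse then Reject i j
             else Match i j)"

definition step :: "market \<Rightarrow> state \<Rightarrow> state" where
  "step M s = (case act M s of
      Stop \<Rightarrow> s
    | Interview i j \<Rightarrow> s\<lparr>intv := insert (i,j) (intv s)\<rparr>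
    | Reject i j \<Rightarrow> s\<lparr>rej := insert (i,j) (rej s)\<rparr>
    | Match i j \<Rightarrow> (case muP M s j of
          None \<Rightarrow> s\<lparr>mA := (mA s)(i := Some j)\<rparr>
        | Some i' \<Rightarrow> s\<lparr>mA := (mA s)(i' := None, i := Some j),
                       rej := insert (i',j) (rej s)\<rparr>))"

definition init :: state where
  "init = \<lparr>mA = (\<lambda>_. None), intv = {}, rej = {}\<rparr>"

definition run :: "market \<Rightarrow> nat \<Rightarrow> state" where
  "run M t = (step M ^^ t) init"

end

theory Submission imports Defs begin

text \<open>Interviewing only raises the observed utilities of the pair involved when both
  noise terms are nonnegative, so after the interview \<open>p\<^sub>j\<close> is still the first choice of
  \<open>a\<^sub>i\<close> and \<open>a\<^sub>i\<close> still the favourite proposer of the unmatched \<open>p\<^sub>j\<close>: they are matched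
  next. From then on \<open>p\<^sub>j\<close> always holds an applicant it values at least \<open>u\<^sub>i\<close> (ties
  broken towards indices at most \<open>i\<close>), because it only trades up and interviews never
  touch matched applicants. An applicant \<open>a\<^sub>i\<^sub>'\<close> with \<open>i' > j\<close> is interviewed only if
  his public value beats that partner, which forces \<open>u\<^sub>i\<^sub>' > u\<^sub>i\<close> or a tie with
  \<open>i' < i\<close>, hence \<open>i' < i\<close> by the sorting of the \<open>u\<close>'s.\<close>

abbreviation greatest_in :: "('a \<Rightarrow> 'a \<Rightarrow> bool) \<Rightarrow> 'a set \<Rightarrow> 'a \<Rightarrow> bool" where
  "greatest_in R C x \<equiv> x \<in> C \<and> (\<forall>y\<in>C. y \<noteq> x \<longrightarrow> R x y)"

lemma greatest_in_exists:
  assumes "finite C" "C \<noteq> {}"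
    and total: "\<And>a b. a \<noteq> b \<Longrightarrow> R a b \<or> R b a"
    and trans: "\<And>a b c. R a b \<Longrightarrow> R b c \<Longrightarrow> R a c"
  shows "\<exists>x. greatest_in R C x"
  using assms(1,2)
proof (induction C rule: finite_ne_induct)
  case (singleton x)
  then show ?case by auto
next
  case (insert a F)
  then obtain x where x: "greatest_in R F x" by blast
  show ?case
  proof (cases "R a x")
    case True
    then have "greatest_in R (insert a F) a" using x trans by auto
    then show ?thesis ..
  next
    case False
    then have "greatest_in R (insert a F) x" using x total by auto
    then show ?thesis ..
  qed
qed

lemma the_greatest_in_eq:
  assumes asym: "\<And>a b. R a b \<Longrightarrow> \<not> R b a" and x: "greatest_in R C x"
  shows "(THE x. greatest_in R C x) = x"
proof (rule the_equality)
  show "greatest_in R C x" by (fact x)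
  show "y = x" if y: "greatest_in R C y" for y
  proof (rule ccontr)
    assume "y \<noteq> x"
    then have "R y x" "R x y" using x y by auto
    then show False using asym by blast
  qed
qed

lemma prefA_asym: "prefA M s i j j' \<Longrightarrow> \<not> prefA M s i j' j"
  and prefA_trans: "prefA M s i j j' \<Longrightarrow> prefA M s i j' j'' \<Longrightarrow> prefA M s i j j''"
  and prefA_total: "j \<noteq> j' \<Longrightarrow> prefA M s i j j' \<or> prefA M s i j' j"
  unfolding prefA_def by auto

lemma prefP_asym: "prefP M s j i i' \<Longrightarrow> \<not> prefP M s j i' i"
  and prefP_trans: "prefP M s j i i' \<Longrightarrow> prefP M s j i' i'' \<Longrightarrow> prefP M s j i i''"
  and prefP_total: "i \<noteq> i' \<Longrightarrow> prefP M s j i i' \<or> prefP M s j i' i"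
  unfolding prefP_def by auto

lemma beta_eq_Some_iff:
  "beta M s i = Some j \<longleftrightarrow> greatest_in (prefA M s i) {j. j < N M \<and> (i, j) \<notin> rej s} j"
  (is "_ \<longleftrightarrow> greatest_in ?R ?C j")
proof -
  have beta_eqI: "beta M s i = Some x" if x: "greatest_in ?R ?C x" for x
  proof -
    have "(THE x. greatest_in ?R ?C x) = x" by (rule the_greatest_in_eq[of ?R, OF prefA_asym x])
    then show ?thesis unfolding beta_def Let_def using x by auto
  qed
  show ?thesis
  proof
    have "finite ?C" by (rule finite_subset[of _ "{..<N M}"]) auto
    moreover assume "beta M s i = Some j"
    then have "?C \<noteq> {}" by (auto simp: beta_def Let_def split: if_splits)
    ultimately obtain x where "greatest_in ?R ?C x"
      using greatest_in_exists[of ?C ?R] prefA_total prefA_trans by blast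
    with \<open>beta M s i = Some j\<close> beta_eqI show "greatest_in ?R ?C j" by fastforce
  qed (rule beta_eqI)
qed

lemma favP_eqI: "greatest_in (prefP M s j) C i \<Longrightarrow> favP M s j C = i"
  unfolding favP_def by (rule the_greatest_in_eq[OF prefP_asym])

lemma favP_greatest_in:
  assumes "finite C" "C \<noteq> {}"
  shows "greatest_in (prefP M s j) C (favP M s j C)"
proof -
  obtain i where "greatest_in (prefP M s j) C i"
    using greatest_in_exists[OF assms, of "prefP M s j"] prefP_total prefP_trans by blast
  then show ?thesis using favP_eqI by metis
qed

lemma act_proposal:
  assumes "act M s \<in> {Interview i j, Reject i j, Match i j}"
  shows "j \<in> {j. \<exists>i\<in>unmatched M s. beta M s i = Some j}"
    and "(LEAST j. j \<in> {j. \<exists>i\<in>unmatched M s. beta M s i = Some j}) = j"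
    and "greatest_in (prefP M s j) {i \<in> unmatched M s. beta M s i = Some j} i"
proof -
  let ?J = "{j. \<exists>i\<in>unmatched M s. beta M s i = Some j}"
  let ?C = "{i \<in> unmatched M s. beta M s i = Some j}"
  have choice: "?J \<noteq> {}" "j = (LEAST j. j \<in> ?J)" "i = favP M s j ?C"
    using assms unfolding act_def Let_def by (auto split: if_splits)
  then show "j \<in> ?J" using LeastI_ex[of "\<lambda>j. j \<in> ?J"] by auto
  then have "?C \<noteq> {}" by auto
  moreover have "finite ?C"
    by (rule finite_subset[of _ "{..<N M}"]) (auto simp: unmatched_def)
  ultimately show "greatest_in (prefP M s j) ?C i"
    using favP_greatest_in choice(3) by metis
  show "(LEAST j. j \<in> ?J) = j" using choice(2) by simp
qed

lemma act_eq_if: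
  assumes "j \<in> {j. \<exists>i\<in>unmatched M s. beta M s i = Some j}"
    and "(LEAST j. j \<in> {j. \<exists>i\<in>unmatched M s. beta M s i = Some j}) = j"
    and "favP M s j {i \<in> unmatched M s. beta M s i = Some j} = i"
  shows "act M s =
    (if (i, j) \<notin> intv s \<and> (i \<le> j \<or> (case muP M s j of None \<Rightarrow> True | Some i' \<Rightarrow> prefP M s j i i'))
     then Interview i j
     else if (case muP M s j of None \<Rightarrow> False | Some i' \<Rightarrow> prefP M s j i' i) then Reject i j
     else Match i j)"
proof -
  have nonstop: "(unmatched M s = {} \<or> {j. \<exists>i\<in>unmatched M s. beta M s i = Some j} = {}) = False"
    using assms(1) by auto
  show ?thesis unfolding act_def Let_def nonstop if_False assms(2,3) ..
qed

lemma act_InterviewD: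
  "act M s = Interview i j \<Longrightarrow>
    (i, j) \<notin> intv s \<and> (i \<le> j \<or> (case muP M s j of None \<Rightarrow> True | Some i' \<Rightarrow> prefP M s j i i'))"
  unfolding act_def Let_def by (auto split: if_splits option.splits)

lemma act_MatchD:
  "act M s = Match i j \<Longrightarrow> \<not> (case muP M s j of None \<Rightarrow> False | Some i' \<Rightarrow> prefP M s j i' i)"
  unfolding act_def Let_def by (auto split: if_splits option.splits)

lemma act_unmatched:
  "act M s \<in> {Interview i j, Reject i j, Match i j} \<Longrightarrow> i < N M \<and> mA s i = None"
  using act_proposal(3) by (fastforce simp: unmatched_def)

lemma act_after_nonneg_interview:
  assumes act: "act M s = Interview i j" and unheld: "muP M s j = None"
    and eA: "epsA M i j \<ge> 0" and eP: "epsP M j i \<ge> 0"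
  shows "act M (s\<lparr>intv := insert (i, j) (intv s)\<rparr>) = Match i j"
proof -
  define s' where "s' = s\<lparr>intv := insert (i, j) (intv s)\<rparr>"
  have proposal: "j \<in> {j. \<exists>i\<in>unmatched M s. beta M s i = Some j}"
      "(LEAST j. j \<in> {j. \<exists>i\<in>unmatched M s. beta M s i = Some j}) = j"
      "greatest_in (prefP M s j) {i \<in> unmatched M s. beta M s i = Some j} i"
    using act_proposal[of M s i j] act by auto
  have fresh: "(i, j) \<notin> intv s" using act_InterviewD[OF act] by simp
  have unmatched_eq: "unmatched M s' = unmatched M s" by (simp add: s'_def unmatched_def)
  have muP_eq: "muP M s' = muP M s" by (simp add: s'_def muP_def fun_eq_iff)
  have beta_eq: "beta M s' = beta M s"
  proof
    fix a
    show "beta M s' a = beta M s a"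
    proof (cases "a = i")
      case True
      have "greatest_in (prefA M s i) {j. j < N M \<and> (i, j) \<notin> rej s} j"
        using proposal(3) beta_eq_Some_iff by blast
      moreover have "prefA M s i j j' \<Longrightarrow> prefA M s' i j j'" if "j' \<noteq> j" for j'
        using that fresh eA unfolding prefA_def vo_def s'_def by auto
      ultimately have "beta M s' i = Some j"
        unfolding beta_eq_Some_iff by (simp add: s'_def)
      then show ?thesis using True proposal(3) by simp
    next
      case False
      then have "prefA M s' a = prefA M s a" "rej s' = rej s"
        by (auto simp: prefA_def vo_def s'_def fun_eq_iff)
      then show ?thesis unfolding beta_def by (simp only:)
    qed
  qed
  have interviewed: "(i, j) \<in> intv s'" by (simp add: s'_def)
  have "prefP M s j i i' \<Longrightarrow> prefP M s' j i i'" if "i' \<noteq> i" for i'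
    using that fresh eP unfolding prefP_def uo_def s'_def by auto
  then have "favP M s' j {i \<in> unmatched M s. beta M s i = Some j} = i"
    using proposal(3) by (intro favP_eqI) auto
  then have "act M s' = Match i j"
    using proposal(1,2) unheld
    by (subst act_eq_if[of j M s' i]) (simp_all add: unmatched_eq muP_eq beta_eq interviewed)
  then show ?thesis by (simp add: s'_def)
qed

definition inj_matching :: "market \<Rightarrow> state \<Rightarrow> bool" where
  "inj_matching M s \<longleftrightarrow> inj_on (mA s) {a. a < N M \<and> mA s a \<noteq> None}"

definition holds_at_least :: "market \<Rightarrow> nat \<Rightarrow> nat \<Rightarrow> state \<Rightarrow> bool" where
  "holds_at_least M i j s \<longleftrightarrow> (\<exists>m<N M. mA s m = Some j \<and>
     (uo M s j m > uA M i \<or> (uo M s j m = uA M i \<and> m \<le> i)))"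

lemma muP_SomeD: "muP M s j = Some m \<Longrightarrow> m < N M \<and> mA s m = Some j"
  unfolding muP_def
  by (auto split: if_splits intro: LeastI2_ex[where P = "\<lambda>i. i < N M \<and> mA s i = Some j"])

lemma muP_NoneD: "muP M s j = None \<Longrightarrow> m < N M \<Longrightarrow> mA s m \<noteq> Some j"
  unfolding muP_def by (auto split: if_splits)

lemma muP_eq_SomeI:
  assumes "inj_matching M s" "m < N M" "mA s m = Some j"
  shows "muP M s j = Some m"
proof -
  have "(LEAST i. i < N M \<and> mA s i = Some j) = m"
  proof (rule Least_equality)
    show "m < N M \<and> mA s m = Some j" using assms(2,3) ..
    show "m \<le> m'" if "m' < N M \<and> mA s m' = Some j" for m'
      using inj_onD[OF assms(1)[unfolded inj_matching_def], of m' m] that assms(2,3) by simp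
  qed
  then show ?thesis unfolding muP_def using assms by auto
qed

lemma inj_matching_step:
  assumes inj: "inj_matching M s" shows "inj_matching M (step M s)"
proof (cases "act M s")
  case (Match a b)
  have a: "a < N M" "mA s a = None" using act_unmatched[of M s a b] Match by auto
  show ?thesis
  proof (cases "muP M s b")
    case None
    then show ?thesis using Match inj a muP_NoneD[OF None]
      unfolding step_def inj_matching_def inj_on_def by auto
  next
    case (Some i')
    then show ?thesis using Match inj a muP_SomeD[OF Some]
      unfolding step_def inj_matching_def inj_on_def by auto
  qed
qed (use inj in \<open>auto simp: step_def inj_matching_def\<close>)

lemma run_Suc: "run M (Suc t) = step M (run M t)"
  by (simp add: run_def)

lemma inj_matching_run: "inj_matching M (run M t)"
  by (induction t) (simp_all add: run_Suc inj_matching_step, simp add: run_def init_def inj_matching_def)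

lemma holds_at_least_step:
  assumes inj: "inj_matching M s" and holds: "holds_at_least M i j s"
  shows "holds_at_least M i j (step M s)"
proof -
  obtain m where m: "m < N M" "mA s m = Some j"
      "uo M s j m > uA M i \<or> (uo M s j m = uA M i \<and> m \<le> i)"
    using holds unfolding holds_at_least_def by blast
  show ?thesis
  proof (cases "act M s")
    case Stop
    then show ?thesis using holds by (simp add: step_def)
  next
    case (Interview a b)
    then have "a \<noteq> m" using act_unmatched[of M s a b] m by auto
    then show ?thesis using Interview m unfolding holds_at_least_def step_def uo_def by auto
  next
    case (Reject a b)
    then show ?thesis using m unfolding holds_at_least_def step_def uo_def by auto
  next
    case (Match a b)
    have a: "a < N M" "mA s a = None" using act_unmatched[of M s a b] Match by auto
    have uo_eq: "uo M (step M s) = uo M s"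
      using Match by (simp add: step_def uo_def fun_eq_iff split: option.splits)
    show ?thesis
    proof (cases "b = j")
      case True
      have "muP M s j = Some m" by (rule muP_eq_SomeI[OF inj m(1,2)])
      moreover have "a \<noteq> m" using a m by auto
      ultimately have "mA (step M s) a = Some j" "prefP M s j a m"
        using Match True act_MatchD[OF Match] prefP_total[of a m M s j]
        by (auto simp: step_def)
      then show ?thesis using a m(3) unfolding holds_at_least_def prefP_def uo_eq by auto
    next
      case False
      have "m \<noteq> a" using m a by auto
      moreover have "muP M s b = Some i' \<Longrightarrow> i' \<noteq> m" for i'
        using muP_SomeD[of M s b i'] m False by auto
      ultimately have "mA (step M s) m = Some j"
        using Match False m by (auto simp: step_def split: option.split)
      then show ?thesis unfolding holds_at_least_def uo_eq using m by auto
    qed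
  qed
qed

lemma holds_at_least_run:
  assumes "holds_at_least M i j (run M t)" "t \<le> t'"
  shows "holds_at_least M i j (run M t')"
  using assms(2,1)
proof (induction t' rule: dec_induct)
  case (step t')
  then show ?case
    using holds_at_least_step[OF inj_matching_run] by (simp add: run_Suc)
qed

lemma interview_when_held:
  assumes u_sorted: "\<forall>a b. a \<le> b \<longrightarrow> b < N M \<longrightarrow> uA M b \<le> uA M a"
    and inj: "inj_matching M s" and holds: "holds_at_least M i j s"
    and act: "act M s = Interview i' j"
  shows "i' < max i (j + 1)"
proof (cases "i' \<le> j")
  case False
  obtain m where m: "m < N M" "mA s m = Some j"
      "uo M s j m > uA M i \<or> (uo M s j m = uA M i \<and> m \<le> i)"
    using holds unfolding holds_at_least_def by blast
  have "muP M s j = Some m" by (rule muP_eq_SomeI[OF inj m(1,2)])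
  then have "(i', j) \<notin> intv s" "prefP M s j i' m"
    using act_InterviewD[OF act] False by auto
  then have "uA M i' > uA M i \<or> (uA M i' = uA M i \<and> i' < i)"
    using m(3) unfolding prefP_def by (auto simp: uo_def)
  moreover have "uA M i' \<le> uA M i" if "i \<le> i'"
    using u_sorted that act_unmatched[of M s i' j] act by simp
  ultimately have "i' < i" by fastforce
  then show ?thesis by simp
qed simp

theorem claim2p2:
  fixes M :: market and t i j :: nat
  assumes u_sorted: "\<forall>a b. a \<le> b \<longrightarrow> b < N M \<longrightarrow> uA M b \<le> uA M a"
    and v_sorted: "\<forall>a b. a \<le> b \<longrightarrow> b < N M \<longrightarrow> vP M b \<le> vP M a"
    and interview: "act M (run M t) = Interview i j"
    and unmatched_pos: "muP M (run M t) j = None"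
    and epsA_nonneg: "epsA M i j \<ge> 0"
    and epsP_nonneg: "epsP M j i \<ge> 0"
  shows "act M (run M (Suc t)) = Match i j \<and>
         (\<forall>t' > t. \<forall>i'. act M (run M t') = Interview i' j \<longrightarrow> i' < max i (j + 1))"
proof -
  let ?s = "run M (Suc t)"
  have s: "?s = (run M t)\<lparr>intv := insert (i, j) (intv (run M t))\<rparr>"
    using interview by (simp add: run_Suc step_def)
  have match: "act M ?s = Match i j"
    unfolding s using interview unmatched_pos epsA_nonneg epsP_nonneg
    by (rule act_after_nonneg_interview)
  have "muP M ?s j = None" using unmatched_pos by (simp add: s muP_def split: if_splits)
  then have s2: "run M (Suc (Suc t)) = ?s\<lparr>mA := (mA ?s)(i := Some j)\<rparr>"
    using match by (simp add: run_Suc[of M "Suc t"] step_def)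
  have "i < N M" using act_unmatched[of M "run M t" i j] interview by simp
  then have "holds_at_least M i j (run M (Suc (Suc t)))"
    using epsP_nonneg unfolding holds_at_least_def uo_def s2 s by (intro exI[of _ i]) auto
  then have "i' < max i (j + 1)" if "t < t'" "act M (run M t') = Interview i' j" for t' i'
  proof -
    have "t' \<noteq> Suc t" using that(2) match by auto
    with \<open>t < t'\<close> have "Suc (Suc t) \<le> t'" by simp
    then show ?thesis using that(2) interview_when_held[OF u_sorted inj_matching_run]
        holds_at_least_run[OF \<open>holds_at_least M i j (run M (Suc (Suc t)))\<close>] by blast
  qed
  with match show ?thesis by blast
qed

end
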